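(* Let $\lambda>0$ and $\varepsilon>0$ be reals and $k>8$ an integer such that $\cos(2\pi/k)-\sin(2\pi/k)=\frac{\lambda+\varepsilon+1}{(\lambda+1)(\varepsilon+1)}$. Let $G=(V,E)$ be a $\lambda$-civilized unit disk graph and let $YY_k$ be its Yao-Yao graph. Then $YY_k$ has maximum degree at most $2k$, is a length $(1+\varepsilon)$-spanner of $G$, and has power stretch factor $(1+\varepsilon)^\beta$ with respect to $G$.
   Context: Unit disk graph (UDG): $V$ is a finite set of points in the Euclidean plane and $E=\{uv: |uv|\le 1\}$, with $|uv|$ Euclidean distance; $G$ is connected. $G$ is $\lambda$-civilized if no two nodes are at distance smaller than $\lambda$. A subgraph $H$ of $G$ on the same vertex set is a length $t$-spanner if for all $u,v$ the length of a shortest $uv$-path in $H$ is at most $t$ times that in $G$. $\beta$ is a fixed real constant (path loss gradient) between 2 and 5; the power of a path is $\sum |e|^\beta$ over its edges $e$; $H$ has power stretch factor $\rho$ if for all $u,v$ the power of a minimum-power $uv$-path in $H$ is at most $\rho$ times the power of a minimum-power $uv$-path in $G$. Cones: with $\theta=2\pi/k$, at each point $u$ the plane is partitioned into $k$ half-open half-closed cones with apex $u$ of angle $\theta$, bounded by $k$ equally spaced rays (same directions at every node); $K_u(v)$ is the cone with apex $u$ containing $v$; an edge $uw$ lies in $K_u$ if $w\in K_u$. Identifiers: nodes have distinct IDs; $\mathrm{ID}(\overrightarrow{uv})=(|uv|,\mathrm{ID}(u),\mathrm{ID}(v))$ compared lexicographically; $\mathrm{ID}(uv)=\min\{\mathrm{ID}(\overrightarrow{uv}),\mathrm{ID}(\overrightarrow{vu})\}$.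 Yao step: for each node $u$ and each cone $K_u$ containing some edge of $E$ incident to $u$, add to $E_Y$ the directed edge $\overrightarrow{uv}$ where $uv$ is the edge of $E$ in $K_u$ with lowest $\mathrm{ID}(uv)$. Reverse Yao step: starting from $E_{YY}=E_Y$, for each node $v$ and each cone $K_v$, among edges $\overrightarrow{uv}\in E_Y$ with $u\in K_v$ keep only the one of smallest ID. $YY_k=(V,E_{YY})$, viewed as undirected. *)

theory Defs
  imports "HOL-Analysis.Analysis"
begin

definition udg_edges :: "complex set \<Rightarrow> (complex \<times> complex) set" where
  "udg_edges V = {(u, v). u \<in> V \<and> v \<in> V \<and> u \<noteq> v \<and> cmod (u - v) \<le> 1}"

definition civilized :: "real \<Rightarrow> complex set \<Rightarrow> bool" where
  "civilized lam V \<longleftrightarrow> (\<forall>u\<in>V. \<forall>v\<in>V. u \<noteq> v \<longrightarrow> lam \<le> cmod (u - v))"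

definition is_path :: "('a \<times> 'a) set \<Rightarrow> 'a \<Rightarrow> 'a \<Rightarrow> 'a list \<Rightarrow> bool" where
  "is_path E u v p \<longleftrightarrow> p \<noteq> [] \<and> hd p = u \<and> last p = v \<and>
     (\<forall>i < length p - 1. (p ! i, p ! Suc i) \<in> E)"

definition graph_connected :: "complex set \<Rightarrow> (complex \<times> complex) set \<Rightarrow> bool" where
  "graph_connected V E \<longleftrightarrow> (\<forall>u\<in>V. \<forall>v\<in>V. \<exists>p. is_path E u v p)"

definition path_length :: "complex list \<Rightarrow> real" where
  "path_length p = sum_list (map (\<lambda>(a, b). cmod (a - b)) (zip p (tl p)))"

definition path_power :: "real \<Rightarrow> complex list \<Rightarrow> real" where
  "path_power \<beta> p = sum_list (map (\<lambda>(a, b). cmod (a - b) powr \<beta>) (zip p (tl p)))"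

text \<open>Cone index: the k cones of angle 2*pi/k at apex u, bounded by the rays
  of directions phi + j*2*pi/k (same at every node); cone j is the half-open
  angular range [phi + j*theta, phi + (j+1)*theta).\<close>
definition cone_index :: "nat \<Rightarrow> real \<Rightarrow> complex \<Rightarrow> complex \<Rightarrow> int" where
  "cone_index k \<phi> u w =
     \<lfloor>(2 * pi * frac ((Arg (w - u) - \<phi>) / (2 * pi))) / (2 * pi / real k)\<rfloor>"

definition dir_id :: "(complex \<Rightarrow> nat) \<Rightarrow> complex \<Rightarrow> complex \<Rightarrow> real \<times> nat \<times> nat" where
  "dir_id idf u v = (cmod (u - v), idf u, idf v)"

fun lex_le :: "real \<times> nat \<times> nat \<Rightarrow> real \<times> nat \<times> nat \<Rightarrow> bool" where
  "lex_le (a1, b1, c1) (a2, b2, c2) \<longleftrightarrow>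
     a1 < a2 \<or> (a1 = a2 \<and> (b1 < b2 \<or> (b1 = b2 \<and> c1 \<le> c2)))"

definition lex_min :: "real \<times> nat \<times> nat \<Rightarrow> real \<times> nat \<times> nat \<Rightarrow> real \<times> nat \<times> nat" where
  "lex_min x y = (if lex_le x y then x else y)"

definition edge_id :: "(complex \<Rightarrow> nat) \<Rightarrow> complex \<Rightarrow> complex \<Rightarrow> real \<times> nat \<times> nat" where
  "edge_id idf u v = lex_min (dir_id idf u v) (dir_id idf v u)"

definition yao_edges :: "nat \<Rightarrow> real \<Rightarrow> (complex \<Rightarrow> nat) \<Rightarrow> complex set \<Rightarrow> (complex \<times> complex) set" where
  "yao_edges k \<phi> idf V = {(u, v). (u, v) \<in> udg_edges V \<and>
     (\<forall>w. (u, w) \<in> udg_edges V \<and> cone_index k \<phi> u w = cone_index k \<phi> u v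
          \<longrightarrow> lex_le (edge_id idf u v) (edge_id idf u w))}"

definition yy_directed :: "nat \<Rightarrow> real \<Rightarrow> (complex \<Rightarrow> nat) \<Rightarrow> complex set \<Rightarrow> (complex \<times> complex) set" where
  "yy_directed k \<phi> idf V = {(u, v). (u, v) \<in> yao_edges k \<phi> idf V \<and>
     (\<forall>w. (w, v) \<in> yao_edges k \<phi> idf V \<and> cone_index k \<phi> v w = cone_index k \<phi> v u
          \<longrightarrow> lex_le (edge_id idf u v) (edge_id idf w v))}"

definition yy_edges :: "nat \<Rightarrow> real \<Rightarrow> (complex \<Rightarrow> nat) \<Rightarrow> complex set \<Rightarrow> (complex \<times> complex) set" where
  "yy_edges k \<phi> idf V = {(u, v). (u, v) \<in> yy_directed k \<phi> idf V \<or> (v, u) \<in> yy_directed k \<phi> idf V}"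

definition max_degree_le :: "complex set \<Rightarrow> (complex \<times> complex) set \<Rightarrow> nat \<Rightarrow> bool" where
  "max_degree_le V H d \<longleftrightarrow> (\<forall>u\<in>V. card {v. (u, v) \<in> H} \<le> d)"

text \<open>Length t-spanner: every u-v path in G is matched by a u-v path in H of length at most t
  times as long (equivalently, shortest-path distance in H at most t times that in G).\<close>
definition length_spanner :: "complex set \<Rightarrow> (complex \<times> complex) set \<Rightarrow> (complex \<times> complex) set \<Rightarrow> real \<Rightarrow> bool" where
  "length_spanner V E H t \<longleftrightarrow> (\<forall>u\<in>V. \<forall>v\<in>V. \<forall>p. is_path E u v p \<longrightarrow>
      (\<exists>q. is_path H u v q \<and> path_length q \<le> t * path_length p))"

definition power_stretch :: "real \<Rightarrow> complex set \<Rightarrow> (complex \<times> complex) set \<Rightarrow> (complex \<times> complex) set \<Rightarrow> real \<Rightarrow> bool" where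
  "power_stretch \<beta> V E H \<rho> \<longleftrightarrow> (\<forall>u\<in>V. \<forall>v\<in>V. \<forall>p. is_path E u v p \<longrightarrow>
      (\<exists>q. is_path H u v q \<and> path_power \<beta> q \<le> \<rho> * path_power \<beta> p))"

end

theory Submission imports Defs begin

text \<open>
  It suffices to stretch single edges of the unit disk graph; stretching paths then follows
  edge by edge, and the power bound follows from the length bound because
  \<open>\<Sum> e\<^sub>i\<^sup>\<beta> \<le> (\<Sum> e\<^sub>i)\<^sup>\<beta>\<close> for \<open>\<beta> \<ge> 1\<close>.
  An edge \<open>uv\<close> is stretched by induction on its length. The Yao step keeps an edge \<open>uw\<close> in the
  cone of \<open>v\<close> at \<open>u\<close> with \<open>|uw| \<le> |uv|\<close>, and the reverse Yao step keeps an edge \<open>xw\<close> with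
  \<open>x\<close> in the cone of \<open>u\<close> at \<open>w\<close> and \<open>\<lambda> \<le> |xw| \<le> |uw|\<close>. With \<open>\<gamma> = cos \<theta> - sin \<theta>\<close>, two points in
  a common cone satisfy \<open>|wv| \<le> |uv| - \<gamma> |uw|\<close> and \<open>|xu| \<le> |uw| - \<gamma> |xw|\<close>, so both
  \<open>ux\<close> and \<open>wv\<close> are shorter than \<open>uv\<close>, and the path \<open>u \<leadsto> x \<rightarrow> w \<leadsto> v\<close> has length at most
  \<open>(1 + \<epsilon>) |uv| + (\<gamma> (1 + \<epsilon>) - 1) (\<lambda> |uw| - |xw|)\<close>. This form uses the identity
  \<open>(1 + \<epsilon>) (1 - \<gamma>) = \<lambda> (\<gamma> (1 + \<epsilon>) - 1)\<close> that defines \<open>\<gamma>\<close>; the error term is nonpositive because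
  \<open>\<gamma> (1 + \<epsilon>) > 1\<close>, \<open>|uw| \<le> 1\<close> and \<open>|xw| \<ge> \<lambda>\<close>.
  The degree bound holds since each node keeps at most one outgoing and one incoming edge per cone.
\<close>

lemma is_path_singleton: "is_path E u v [a] \<longleftrightarrow> a = u \<and> a = v"
  by (auto simp: is_path_def)

lemma is_path_Cons_Cons:
  "is_path E u v (a # b # p) \<longleftrightarrow> a = u \<and> (a, b) \<in> E \<and> is_path E b v (b # p)"
  unfolding is_path_def by (auto simp: All_less_Suc2)

lemma is_path_edge: "(u, v) \<in> E \<Longrightarrow> is_path E u v [u, v]"
  by (simp add: is_path_Cons_Cons is_path_singleton)

lemma is_path_append:
  "is_path E u x p \<Longrightarrow> is_path E x v q \<Longrightarrow> is_path E u v (p @ tl q)"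
proof (induction p arbitrary: u rule: induct_list012)
  case (2 a)
  then show ?case by (cases q) (auto simp: is_path_def)
next
  case (3 a b p)
  then show ?case by (auto simp add: is_path_Cons_Cons)
qed (simp add: is_path_def)

definition walk_weight :: "('a \<times> 'a \<Rightarrow> real) \<Rightarrow> 'a list \<Rightarrow> real" where
  "walk_weight w p = sum_list (map w (zip p (tl p)))"

lemma walk_weight_singleton [simp]: "walk_weight w [a] = 0"
  by (simp add: walk_weight_def)

lemma walk_weight_Cons_Cons [simp]: "walk_weight w (a # b # p) = w (a, b) + walk_weight w (b # p)"
  by (simp add: walk_weight_def)

lemma walk_weight_append:
  "p \<noteq> [] \<Longrightarrow> q \<noteq> [] \<Longrightarrow> last p = hd q \<Longrightarrow>
    walk_weight w (p @ tl q) = walk_weight w p + walk_weight w q"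
proof (induction p rule: induct_list012)
  case (2 a)
  then show ?case by (cases q) auto
qed simp_all

lemma path_length_eq_walk_weight: "path_length p = walk_weight (\<lambda>(a, b). cmod (a - b)) p"
  by (simp add: path_length_def walk_weight_def)

lemma path_power_eq_walk_weight: "path_power \<beta> p = walk_weight (\<lambda>(a, b). cmod (a - b) powr \<beta>) p"
  by (simp add: path_power_def walk_weight_def)

lemma path_length_nonneg: "0 \<le> path_length p"
  by (induction p rule: induct_list012) (simp_all add: path_length_eq_walk_weight walk_weight_def)

lemma path_length_append:
  "is_path E u x p \<Longrightarrow> is_path E x v q \<Longrightarrow> path_length (p @ tl q) = path_length p + path_length q"
  unfolding path_length_eq_walk_weight by (rule walk_weight_append) (auto simp: is_path_def)

lemma path_stretch_from_edge_stretch: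
  assumes edge: "\<And>a b. (a, b) \<in> E \<Longrightarrow> \<exists>q. is_path H a b q \<and> walk_weight w q \<le> t * w (a, b)"
    and "is_path E u v p"
  shows "\<exists>q. is_path H u v q \<and> walk_weight w q \<le> t * walk_weight w p"
  using assms(2)
proof (induction p arbitrary: u rule: induct_list012)
  case (2 a)
  then show ?case by (intro exI[of _ "[a]"]) (auto simp: is_path_singleton)
next
  case (3 a b p)
  then have ab: "(a, b) \<in> E" and "a = u" and rest: "is_path E b v (b # p)"
    by (auto simp: is_path_Cons_Cons)
  obtain q1 where q1: "is_path H a b q1" "walk_weight w q1 \<le> t * w (a, b)"
    using edge[OF ab] by blast
  obtain q2 where q2: "is_path H b v q2" "walk_weight w q2 \<le> t * walk_weight w (b # p)"
    using "3.IH"(2)[OF rest] by blast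
  have "walk_weight w (q1 @ tl q2) = walk_weight w q1 + walk_weight w q2"
    using q1(1) q2(1) by (intro walk_weight_append) (auto simp: is_path_def)
  then show ?case
    using is_path_append[OF q1(1) q2(1)] q1(2) q2(2) \<open>a = u\<close>
    by (intro exI[of _ "q1 @ tl q2"]) (simp add: distrib_left)
qed (simp add: is_path_def)

lemma powr_add_le_powr_add:
  fixes x y b :: real
  assumes "0 \<le> x" "0 \<le> y" "1 \<le> b"
  shows "x powr b + y powr b \<le> (x + y) powr b"
proof -
  have split: "z powr b = z * z powr (b - 1)" if "0 \<le> z" for z :: real
    using that by (cases "z = 0") (simp_all add: powr_mult_base)
  have "x powr b + y powr b \<le> x * (x + y) powr (b - 1) + y * (x + y) powr (b - 1)"
    unfolding split[OF \<open>0 \<le> x\<close>] split[OF \<open>0 \<le> y\<close>]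
    using assms by (intro add_mono mult_left_mono powr_mono2) auto
  also have "\<dots> = (x + y) powr b"
    using assms by (simp add: split distrib_right)
  finally show ?thesis .
qed

lemma path_power_le_path_length_powr:
  assumes "1 \<le> \<beta>"
  shows "path_power \<beta> p \<le> path_length p powr \<beta>"
proof (induction p rule: induct_list012)
  case (3 a b p)
  have "path_power \<beta> (a # b # p) = cmod (a - b) powr \<beta> + path_power \<beta> (b # p)"
    by (simp add: path_power_eq_walk_weight)
  also have "\<dots> \<le> cmod (a - b) powr \<beta> + path_length (b # p) powr \<beta>"
    using "3.IH"(2) by simp
  also have "\<dots> \<le> (cmod (a - b) + path_length (b # p)) powr \<beta>"
    using assms path_length_nonneg by (intro powr_add_le_powr_add) auto
  finally show ?case
    by (simp add: path_length_eq_walk_weight)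
qed (simp_all add: path_length_def path_power_def)

lemma norm_diff_squared_Arg:
  "(cmod (a - b))\<^sup>2 = (cmod a)\<^sup>2 + (cmod b)\<^sup>2 - 2 * cmod a * cmod b * cos (Arg a - Arg b)"
proof -
  have polar: "Re z = cmod z * cos (Arg z)" "Im z = cmod z * sin (Arg z)" for z
    using Re_rcis[of "cmod z" "Arg z"] Im_rcis[of "cmod z" "Arg z"] by (simp_all add: rcis_cmod_Arg)
  have "(cmod (a - b))\<^sup>2 = (Re a - Re b)\<^sup>2 + (Im a - Im b)\<^sup>2"
    by (simp add: cmod_power2)
  also have "\<dots> = (Re a)\<^sup>2 + (Im a)\<^sup>2 + ((Re b)\<^sup>2 + (Im b)\<^sup>2) - 2 * (Re a * Re b + Im a * Im b)"
    by (simp add: power2_eq_square algebra_simps)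
  also have "Re a * Re b + Im a * Im b = cmod a * cmod b * cos (Arg a - Arg b)"
    unfolding polar cos_diff by (simp add: algebra_simps)
  finally show ?thesis
    by (simp add: cmod_power2)
qed

lemma cone_index_range: "0 < k \<Longrightarrow> cone_index k \<phi> u w \<in> {0..<int k}"
  using frac_lt_1[of "(Arg (w - u) - \<phi>) / (2 * pi)"] frac_ge_0[of "(Arg (w - u) - \<phi>) / (2 * pi)"]
  by (auto simp: cone_index_def floor_less_iff)

lemma cos_cone_angle_le:
  assumes "2 \<le> k" and same_cone: "cone_index k \<phi> u v = cone_index k \<phi> u w"
  shows "cos (2 * pi / real k) \<le> cos (Arg (v - u) - Arg (w - u))"
proof -
  define \<theta> where "\<theta> = 2 * pi / real k"
  define X where "X = (Arg (v - u) - \<phi>) / (2 * pi)"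
  define Y where "Y = (Arg (w - u) - \<phi>) / (2 * pi)"
  have \<theta>: "0 < \<theta>" "\<theta> \<le> pi"
    using \<open>2 \<le> k\<close> by (auto simp: \<theta>_def field_simps)
  have "\<lfloor>frac X * real k\<rfloor> = \<lfloor>frac Y * real k\<rfloor>"
    using same_cone \<open>2 \<le> k\<close> by (simp add: cone_index_def X_def Y_def)
  then have "\<bar>frac X * real k - frac Y * real k\<bar> < 1"
    by linarith
  then have "\<bar>frac X - frac Y\<bar> * real k < 1"
    by (simp add: abs_mult flip: left_diff_distrib)
  then have "\<bar>frac X - frac Y\<bar> < 1 / real k"
    using \<open>2 \<le> k\<close> by (simp add: field_simps)
  then have close: "\<bar>2 * pi * (frac X - frac Y)\<bar> < \<theta>"
    unfolding \<theta>_def abs_mult using mult_strict_left_mono[of _ "1 / real k" "2 * pi"] by simp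
  have "Arg (v - u) - Arg (w - u) = 2 * pi * (frac X - frac Y) + 2 * pi * of_int (\<lfloor>X\<rfloor> - \<lfloor>Y\<rfloor>)"
    by (simp add: X_def Y_def frac_def field_simps)
  then have "cos (Arg (v - u) - Arg (w - u)) = cos \<bar>2 * pi * (frac X - frac Y)\<bar>"
    by (simp only: cos_add cos_int_2pin sin_int_2pin) simp
  moreover have "cos \<theta> \<le> cos \<bar>2 * pi * (frac X - frac Y)\<bar>"
    using close \<theta> by (intro cos_monotone_0_pi_le) auto
  ultimately show ?thesis
    by (simp add: \<theta>_def)
qed

lemma law_of_cosines_upper_bound:
  fixes a b \<alpha> \<theta> :: real
  assumes "0 \<le> b" "b \<le> a" "0 \<le> \<theta>" "\<theta> \<le> pi" "cos \<theta> \<le> \<alpha>"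
  shows "a\<^sup>2 + b\<^sup>2 - 2 * a * b * \<alpha> \<le> (a - (cos \<theta> - sin \<theta>) * b)\<^sup>2"
proof -
  have "0 \<le> sin \<theta>" "b * cos \<theta> \<le> b"
    using assms by (auto simp: sin_ge_zero mult_left_le)
  then have "0 \<le> 2 * b * sin \<theta> * (a - b * cos \<theta>)"
    using assms by simp
  also have "\<dots> = (a - (cos \<theta> - sin \<theta>) * b)\<^sup>2 - (a\<^sup>2 + b\<^sup>2 - 2 * a * b * cos \<theta>)"
    using sin_cos_squared_add3[of \<theta>] unfolding power2_eq_square by algebra
  finally show ?thesis
    using assms mult_left_mono[OF \<open>cos \<theta> \<le> \<alpha>\<close>, of "2 * a * b"] by simp
qed

lemma dist_le_of_same_cone:
  assumes "2 \<le> k" and same_cone: "cone_index k \<phi> u v = cone_index k \<phi> u w"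
    and closer: "cmod (w - u) \<le> cmod (v - u)"
  shows "cmod (w - v) \<le> cmod (v - u) - (cos (2 * pi / real k) - sin (2 * pi / real k)) * cmod (w - u)"
proof -
  define \<theta> where "\<theta> = 2 * pi / real k"
  define a where "a = cmod (v - u)"
  define b where "b = cmod (w - u)"
  have \<theta>: "0 \<le> \<theta>" "\<theta> \<le> pi"
    using \<open>2 \<le> k\<close> by (auto simp: \<theta>_def field_simps)
  have ab: "0 \<le> b" "b \<le> a"
    using closer by (simp_all add: a_def b_def)
  have "(cmod (w - v))\<^sup>2 = (cmod ((v - u) - (w - u)))\<^sup>2"
    by (simp add: norm_minus_commute)
  also have "\<dots> = a\<^sup>2 + b\<^sup>2 - 2 * a * b * cos (Arg (v - u) - Arg (w - u))"
    unfolding norm_diff_squared_Arg a_def b_def ..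
  also have "\<dots> \<le> (a - (cos \<theta> - sin \<theta>) * b)\<^sup>2"
    using ab \<theta> cos_cone_angle_le[OF assms(1,2)] unfolding \<theta>_def
    by (rule law_of_cosines_upper_bound)
  finally have "(cmod (w - v))\<^sup>2 \<le> (a - (cos \<theta> - sin \<theta>) * b)\<^sup>2" .
  moreover have "cos \<theta> - sin \<theta> \<le> 1"
    using \<theta> sin_ge_zero[of \<theta>] cos_le_one[of \<theta>] by linarith
  then have "0 \<le> a - (cos \<theta> - sin \<theta>) * b"
    using ab mult_right_mono[of "cos \<theta> - sin \<theta>" 1 b] by simp
  ultimately have "cmod (w - v) \<le> a - (cos \<theta> - sin \<theta>) * b"
    by (rule power2_le_imp_le)
  then show ?thesis
    by (simp add: a_def b_def \<theta>_def)
qed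

lemma lex_le_refl: "lex_le x x"
  by (cases x) auto

lemma lex_le_total: "lex_le x y \<or> lex_le y x"
  by (cases x; cases y) auto

lemma lex_le_trans: "lex_le x y \<Longrightarrow> lex_le y z \<Longrightarrow> lex_le x z"
  by (cases x; cases y; cases z) auto

lemma lex_le_antisym: "lex_le x y \<Longrightarrow> lex_le y x \<Longrightarrow> x = y"
  by (cases x; cases y) auto

lemma lex_le_imp_fst_le: "lex_le x y \<Longrightarrow> fst x \<le> fst y"
  by (cases x; cases y) auto

lemma finite_ex_lex_le_min:
  assumes "finite S" "S \<noteq> {}"
  shows "\<exists>x\<in>S. \<forall>y\<in>S. lex_le (f x) (f y)"
  using assms
proof (induction S rule: finite_ne_induct)
  case (insert a S)
  then obtain x where "x \<in> S" "\<forall>y\<in>S. lex_le (f x) (f y)"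
    by blast
  then show ?case
    using lex_le_total lex_le_trans lex_le_refl by (metis insert_iff)
qed (simp add: lex_le_refl)

lemma fst_edge_id: "fst (edge_id idf u v) = cmod (u - v)"
  by (simp add: edge_id_def lex_min_def dir_id_def norm_minus_commute)

lemma edge_id_commute: "edge_id idf u v = edge_id idf v u"
  unfolding edge_id_def lex_min_def using lex_le_antisym lex_le_total by metis

lemma edge_id_eq_imp_id_eq:
  assumes "edge_id idf u v = edge_id idf u v'" "idf u \<noteq> idf v" "idf u \<noteq> idf v'"
  shows "idf v = idf v'"
  using assms unfolding edge_id_def lex_min_def dir_id_def by (auto split: if_splits)

lemma yao_edge_exists:
  assumes "finite V" "(u, v) \<in> udg_edges V"
  shows "\<exists>w. (u, w) \<in> yao_edges k \<phi> idf V \<and> cone_index k \<phi> u w = cone_index k \<phi> u v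
    \<and> lex_le (edge_id idf u w) (edge_id idf u v)"
proof -
  define S where "S = {w. (u, w) \<in> udg_edges V \<and> cone_index k \<phi> u w = cone_index k \<phi> u v}"
  have "finite S"
    using \<open>finite V\<close> by (rule finite_subset[rotated]) (auto simp: S_def udg_edges_def)
  moreover have "v \<in> S"
    using assms by (simp add: S_def)
  ultimately obtain w where "w \<in> S" "\<forall>y\<in>S. lex_le (edge_id idf u w) (edge_id idf u y)"
    using finite_ex_lex_le_min[of S "edge_id idf u"] by blast
  then show ?thesis
    using \<open>v \<in> S\<close> by (auto simp: yao_edges_def S_def)
qed

lemma yy_directed_edge_exists:
  assumes "finite V" "(u, v) \<in> yao_edges k \<phi> idf V"
  shows "\<exists>x. (x, v) \<in> yy_directed k \<phi> idf V \<and> cone_index k \<phi> v x = cone_index k \<phi> v u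
    \<and> lex_le (edge_id idf x v) (edge_id idf u v)"
proof -
  define S where "S = {x. (x, v) \<in> yao_edges k \<phi> idf V \<and> cone_index k \<phi> v x = cone_index k \<phi> v u}"
  have "finite S"
    using \<open>finite V\<close> by (rule finite_subset[rotated]) (auto simp: S_def yao_edges_def udg_edges_def)
  moreover have "u \<in> S"
    using assms by (simp add: S_def)
  ultimately obtain x where "x \<in> S" "\<forall>y\<in>S. lex_le (edge_id idf x v) (edge_id idf y v)"
    using finite_ex_lex_le_min[of S "\<lambda>x. edge_id idf x v"] by blast
  then show ?thesis
    using \<open>u \<in> S\<close> by (auto simp: yy_directed_def S_def)
qed

lemma card_le_if_inj_on_cone_index:
  assumes "0 < k" "inj_on (cone_index k \<phi> u) S"
  shows "card S \<le> k"
proof -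
  have "card S = card (cone_index k \<phi> u ` S)"
    using assms(2) by (simp add: card_image)
  also have "\<dots> \<le> card {0..<int k}"
    using cone_index_range[OF \<open>0 < k\<close>] by (intro card_mono) auto
  finally show ?thesis
    by simp
qed

lemma inj_on_cone_index_yao_out:
  assumes "inj_on idf V"
  shows "inj_on (cone_index k \<phi> u) {v. (u, v) \<in> yao_edges k \<phi> idf V}"
proof (rule inj_onI)
  fix v v'
  assume "v \<in> {v. (u, v) \<in> yao_edges k \<phi> idf V}" "v' \<in> {v. (u, v) \<in> yao_edges k \<phi> idf V}"
    and same_cone: "cone_index k \<phi> u v = cone_index k \<phi> u v'"
  then have uv: "(u, v) \<in> yao_edges k \<phi> idf V" and uv': "(u, v') \<in> yao_edges k \<phi> idf V"
    by simp_all
  then have "edge_id idf u v = edge_id idf u v'"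
    using same_cone by (intro lex_le_antisym) (auto simp: yao_edges_def)
  moreover have "u \<in> V" "v \<in> V" "v' \<in> V" "u \<noteq> v" "u \<noteq> v'"
    using uv uv' by (auto simp: yao_edges_def udg_edges_def)
  ultimately show "v = v'"
    using assms edge_id_eq_imp_id_eq by (metis inj_onD)
qed

lemma inj_on_cone_index_yy_in:
  assumes "inj_on idf V"
  shows "inj_on (cone_index k \<phi> u) {v. (v, u) \<in> yy_directed k \<phi> idf V}"
proof (rule inj_onI)
  fix v v'
  assume "v \<in> {v. (v, u) \<in> yy_directed k \<phi> idf V}" "v' \<in> {v. (v, u) \<in> yy_directed k \<phi> idf V}"
    and same_cone: "cone_index k \<phi> u v = cone_index k \<phi> u v'"
  then have vu: "(v, u) \<in> yy_directed k \<phi> idf V" and vu': "(v', u) \<in> yy_directed k \<phi> idf V"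
    by simp_all
  then have "edge_id idf v u = edge_id idf v' u"
    using same_cone by (intro lex_le_antisym) (auto simp: yy_directed_def)
  then have "edge_id idf u v = edge_id idf u v'"
    by (simp add: edge_id_commute)
  moreover have "u \<in> V" "v \<in> V" "v' \<in> V" "u \<noteq> v" "u \<noteq> v'"
    using vu vu' by (auto simp: yy_directed_def yao_edges_def udg_edges_def)
  ultimately show "v = v'"
    using assms edge_id_eq_imp_id_eq by (metis inj_onD)
qed

lemma yy_max_degree:
  assumes "0 < k" "inj_on idf V"
  shows "max_degree_le V (yy_edges k \<phi> idf V) (2 * k)"
  unfolding max_degree_le_def
proof
  fix u
  have "inj_on (cone_index k \<phi> u) {v. (u, v) \<in> yy_directed k \<phi> idf V}"
    by (rule inj_on_subset[OF inj_on_cone_index_yao_out[OF assms(2)]]) (auto simp: yy_directed_def)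
  then have out: "card {v. (u, v) \<in> yy_directed k \<phi> idf V} \<le> k"
    by (rule card_le_if_inj_on_cone_index[OF assms(1)])
  have "card {v. (u, v) \<in> yy_edges k \<phi> idf V}
      \<le> card {v. (u, v) \<in> yy_directed k \<phi> idf V} + card {v. (v, u) \<in> yy_directed k \<phi> idf V}"
    unfolding yy_edges_def by (simp add: Collect_disj_eq card_Un_le)
  also have "\<dots> \<le> k + k"
    using out card_le_if_inj_on_cone_index[OF assms(1) inj_on_cone_index_yy_in[OF assms(2)]]
    by (intro add_mono)
  finally show "card {v. (u, v) \<in> yy_edges k \<phi> idf V} \<le> 2 * k"
    by simp
qed

lemma finite_measure_induct:
  fixes f :: "'a \<Rightarrow> real"
  assumes "finite S" "x \<in> S"
    and step: "\<And>x. x \<in> S \<Longrightarrow> (\<And>y. y \<in> S \<Longrightarrow> f y < f x \<Longrightarrow> P y) \<Longrightarrow> P x"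
  shows "P x"
  using assms(2)
proof (induction "card {y \<in> S. f y < f x}" arbitrary: x rule: less_induct)
  case less
  show ?case
  proof (rule step[OF less.prems])
    fix y
    assume "y \<in> S" "f y < f x"
    then have "{z \<in> S. f z < f y} \<subset> {z \<in> S. f z < f x}"
      by auto
    then have "card {z \<in> S. f z < f y} < card {z \<in> S. f z < f x}"
      using \<open>finite S\<close> by (intro psubset_card_mono) auto
    then show "P y"
      using less.hyps \<open>y \<in> S\<close> by blast
  qed
qed

locale civilized_yao_yao =
  fixes lam eps \<phi> :: real and k :: nat and idf :: "complex \<Rightarrow> nat" and V :: "complex set"
  assumes lam_pos: "0 < lam" and eps_pos: "0 < eps" and k_ge_2: "2 \<le> k"
    and cone_constant: "cos (2 * pi / real k) - sin (2 * pi / real k) = (lam + eps + 1) / ((lam + 1) * (eps + 1))"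
    and finite_V: "finite V" and civilized: "civilized lam V" and inj_idf: "inj_on idf V"
begin

abbreviation "\<gamma> \<equiv> cos (2 * pi / real k) - sin (2 * pi / real k)"
abbreviation "YY \<equiv> yy_edges k \<phi> idf V"

lemma gamma_pos: "0 < \<gamma>"
  using lam_pos eps_pos by (simp add: cone_constant)

lemma gamma_mult_eq: "\<gamma> * ((lam + 1) * (eps + 1)) = lam + eps + 1"
  using lam_pos eps_pos by (simp add: cone_constant)

lemma gain_pos: "0 < \<gamma> * (1 + eps) - 1"
proof -
  have "(\<gamma> * (1 + eps) - 1) * (lam + 1) = eps"
    using gamma_mult_eq by algebra
  then show ?thesis
    using zero_less_mult_pos2[of "\<gamma> * (1 + eps) - 1" "lam + 1"] lam_pos eps_pos by simp
qed

lemma loss_eq_lam_gain: "(1 + eps) * (1 - \<gamma>) = lam * (\<gamma> * (1 + eps) - 1)"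
  using gamma_mult_eq by algebra

lemma udg_edge_length_ge_lam: "(u, v) \<in> udg_edges V \<Longrightarrow> lam \<le> cmod (u - v)"
  using civilized by (auto simp: udg_edges_def civilized_def)

lemma yy_path_stretch_step:
  assumes uv: "(u, v) \<in> udg_edges V"
    and IH: "\<And>a b. a \<in> V \<Longrightarrow> b \<in> V \<Longrightarrow> cmod (a - b) < cmod (u - v) \<Longrightarrow>
      \<exists>q. is_path YY a b q \<and> path_length q \<le> (1 + eps) * cmod (a - b)"
  shows "\<exists>q. is_path YY u v q \<and> path_length q \<le> (1 + eps) * cmod (u - v)"
proof -
  obtain w where uw: "(u, w) \<in> yao_edges k \<phi> idf V" and cone_uw: "cone_index k \<phi> u w = cone_index k \<phi> u v"
    and "lex_le (edge_id idf u w) (edge_id idf u v)"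
    using yao_edge_exists[OF finite_V uv] by blast
  then have uw_le: "cmod (u - w) \<le> cmod (u - v)"
    using lex_le_imp_fst_le by (fastforce simp: fst_edge_id)
  obtain x where xw: "(x, w) \<in> yy_directed k \<phi> idf V" and cone_xw: "cone_index k \<phi> w x = cone_index k \<phi> w u"
    and "lex_le (edge_id idf x w) (edge_id idf u w)"
    using yy_directed_edge_exists[OF finite_V uw] by blast
  then have xw_le: "cmod (x - w) \<le> cmod (u - w)"
    using lex_le_imp_fst_le by (fastforce simp: fst_edge_id)
  have uwE: "(u, w) \<in> udg_edges V" and xwE: "(x, w) \<in> udg_edges V"
    using uw xw by (simp_all add: yao_edges_def yy_directed_def)
  have in_V: "u \<in> V" "v \<in> V" "w \<in> V" "x \<in> V"
    using uv uwE xwE by (simp_all add: udg_edges_def)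
  have xw_ge: "lam \<le> cmod (x - w)" and uw_ge: "lam \<le> cmod (u - w)"
    using udg_edge_length_ge_lam uwE xwE by auto
  have ux: "cmod (u - x) \<le> cmod (u - w) - \<gamma> * cmod (x - w)"
    using dist_le_of_same_cone[OF k_ge_2 cone_xw[symmetric]] xw_le
    by (simp add: norm_minus_commute)
  have wv: "cmod (w - v) \<le> cmod (u - v) - \<gamma> * cmod (u - w)"
    using dist_le_of_same_cone[OF k_ge_2 cone_uw[symmetric]] uw_le
    by (simp add: norm_minus_commute)
  have "0 < \<gamma> * cmod (x - w)" "0 < \<gamma> * cmod (u - w)"
    using gamma_pos lam_pos xw_ge uw_ge by (auto intro!: mult_pos_pos)
  then have "cmod (u - x) < cmod (u - v)" "cmod (w - v) < cmod (u - v)"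
    using ux wv uw_le by linarith+
  then obtain q1 q2 where q1: "is_path YY u x q1" "path_length q1 \<le> (1 + eps) * cmod (u - x)"
    and q2: "is_path YY w v q2" "path_length q2 \<le> (1 + eps) * cmod (w - v)"
    using IH in_V by meson
  have xw_path: "is_path YY x w [x, w]"
    using xw by (intro is_path_edge) (simp add: yy_edges_def)
  define q where "q = (q1 @ tl [x, w]) @ tl q2"
  have path: "is_path YY u v q"
    unfolding q_def by (rule is_path_append[OF is_path_append[OF q1(1) xw_path] q2(1)])
  have "path_length q = path_length q1 + cmod (x - w) + path_length q2"
    unfolding q_def
    using path_length_append[OF is_path_append[OF q1(1) xw_path] q2(1)]
      path_length_append[OF q1(1) xw_path]
    by (simp add: path_length_eq_walk_weight)
  also have "\<dots> \<le> (1 + eps) * (cmod (u - w) - \<gamma> * cmod (x - w)) + cmod (x - w)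
      + (1 + eps) * (cmod (u - v) - \<gamma> * cmod (u - w))"
  proof -
    have "(1 + eps) * cmod (u - x) \<le> (1 + eps) * (cmod (u - w) - \<gamma> * cmod (x - w))"
      "(1 + eps) * cmod (w - v) \<le> (1 + eps) * (cmod (u - v) - \<gamma> * cmod (u - w))"
      using ux wv eps_pos by (simp_all add: mult_left_mono)
    then show ?thesis
      using q1(2) q2(2) by linarith
  qed
  also have "\<dots> = (1 + eps) * cmod (u - v)
      + (\<gamma> * (1 + eps) - 1) * (lam * cmod (u - w) - cmod (x - w))"
    using loss_eq_lam_gain by algebra
  also have "\<dots> \<le> (1 + eps) * cmod (u - v)"
  proof -
    have "lam * cmod (u - w) \<le> lam"
      using uwE lam_pos by (simp add: udg_edges_def mult_left_le)
    then show ?thesis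
      using xw_ge gain_pos by (simp add: mult_nonneg_nonpos)
  qed
  finally show ?thesis
    using path by blast
qed

lemma yy_path_stretch:
  assumes "u \<in> V" "v \<in> V" "cmod (u - v) \<le> 1"
  shows "\<exists>q. is_path YY u v q \<and> path_length q \<le> (1 + eps) * cmod (u - v)"
proof -
  define P where "P = (\<lambda>(a, b). cmod (a - b) \<le> 1 \<longrightarrow>
    (\<exists>q. is_path YY a b q \<and> path_length q \<le> (1 + eps) * cmod (a - b)))"
  have "P (u, v)"
  proof (rule finite_measure_induct[where f = "\<lambda>(a, b). cmod (a - b)"])
    show "finite (V \<times> V)" "(u, v) \<in> V \<times> V"
      using finite_V assms by auto
  next
    fix p
    assume "p \<in> V \<times> V"
      and IH: "\<And>p'. p' \<in> V \<times> V \<Longrightarrow> (\<lambda>(a, b). cmod (a - b)) p' < (\<lambda>(a, b). cmod (a - b)) p \<Longrightarrow> P p'"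
    then obtain a b where p: "p = (a, b)" "a \<in> V" "b \<in> V"
      by blast
    show "P p"
    proof (cases "a = b")
      case True
      then show ?thesis
        by (auto simp: P_def p is_path_singleton path_length_def intro!: exI[of _ "[b]"])
    next
      case False
      have "\<exists>q. is_path YY a b q \<and> path_length q \<le> (1 + eps) * cmod (a - b)"
        if "cmod (a - b) \<le> 1"
      proof (rule yy_path_stretch_step)
        show "(a, b) \<in> udg_edges V"
          using p False that by (simp add: udg_edges_def)
        show "\<exists>q. is_path YY a' b' q \<and> path_length q \<le> (1 + eps) * cmod (a' - b')"
          if "a' \<in> V" "b' \<in> V" "cmod (a' - b') < cmod (a - b)" for a' b'
          using IH[of "(a', b')"] that \<open>cmod (a - b) \<le> 1\<close> by (auto simp: P_def p)
      qed
      then show ?thesis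
        by (simp add: P_def p)
    qed
  qed
  then show ?thesis
    using assms(3) by (simp add: P_def)
qed

lemma yy_length_spanner: "length_spanner V (udg_edges V) YY (1 + eps)"
  unfolding length_spanner_def path_length_eq_walk_weight
  using yy_path_stretch
  by (intro ballI allI impI path_stretch_from_edge_stretch)
    (auto simp: udg_edges_def path_length_eq_walk_weight)

lemma yy_power_stretch:
  assumes "1 \<le> \<beta>"
  shows "power_stretch \<beta> V (udg_edges V) YY ((1 + eps) powr \<beta>)"
  unfolding power_stretch_def path_power_eq_walk_weight
proof (intro ballI allI impI path_stretch_from_edge_stretch)
  fix a b
  assume "(a, b) \<in> udg_edges V"
  then obtain q where q: "is_path YY a b q" "path_length q \<le> (1 + eps) * cmod (a - b)"
    using yy_path_stretch by (auto simp: udg_edges_def)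
  have "path_power \<beta> q \<le> path_length q powr \<beta>"
    using assms by (rule path_power_le_path_length_powr)
  also have "\<dots> \<le> ((1 + eps) * cmod (a - b)) powr \<beta>"
    using q(2) assms path_length_nonneg by (intro powr_mono2) auto
  also have "\<dots> = (1 + eps) powr \<beta> * cmod (a - b) powr \<beta>"
    using eps_pos by (simp add: powr_mult)
  finally show "\<exists>q. is_path YY a b q \<and> walk_weight (\<lambda>(a, b). cmod (a - b) powr \<beta>) q
      \<le> (1 + eps) powr \<beta> * (\<lambda>(a, b). cmod (a - b) powr \<beta>) (a, b)"
    using q(1) by (auto simp: path_power_eq_walk_weight)
qed

end

theorem corollary1:
  fixes lam eps \<beta> \<phi> :: real and k :: nat and V :: "complex set" and idf :: "complex \<Rightarrow> nat"
  assumes "0 < lam" and "0 < eps" and "8 < k"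
    and "cos (2 * pi / real k) - sin (2 * pi / real k) = (lam + eps + 1) / ((lam + 1) * (eps + 1))"
    and "2 \<le> \<beta>" and "\<beta> \<le> 5"
    and "finite V"
    and "graph_connected V (udg_edges V)"
    and "civilized lam V"
    and "inj_on idf V"
  shows "max_degree_le V (yy_edges k \<phi> idf V) (2 * k)
    \<and> length_spanner V (udg_edges V) (yy_edges k \<phi> idf V) (1 + eps)
    \<and> power_stretch \<beta> V (udg_edges V) (yy_edges k \<phi> idf V) ((1 + eps) powr \<beta>)"
proof -
  interpret civilized_yao_yao lam eps \<phi> k idf V
    using assms by unfold_locales auto
  show ?thesis
    using yy_max_degree[of k idf V \<phi>] yy_length_spanner yy_power_stretch assms by simp
qed

end
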